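(* Let $n\in\mathbb{N}$ with $n\ge 2$, and let $\alpha:=\frac{n+\sqrt{n^2+4}}{2}$, $\gamma:=1/\alpha$, $\tau:=\log\alpha/\log n$. Then the number $\alpha-n=\frac{\sqrt{n^2+4}-n}{2}\in(0,1)$ is an isolated point of $D_{\gamma,\tau}\cap[0,1]$.
   Context: For $\gamma>0$ and $\tau\ge 1$, the Diophantine set $D_{\gamma,\tau}$ is the set of all real numbers $\xi$ such that $|\xi q-p|\ge \gamma/q^{\tau}$ for all $p\in\mathbb{Z}$ and all $q\in\mathbb{N}=\{1,2,3,\dots\}$. *)

theory Defs
  imports "HOL-Analysis.Analysis"
begin

definition diophantine_set :: "real \<Rightarrow> real \<Rightarrow> real set" where
  "diophantine_set \<gamma> \<tau> =
     {\<xi>. \<forall>p::int. \<forall>q::nat. q \<ge> 1 \<longrightarrow> \<bar>\<xi> * real q - real_of_int p\<bar> \<ge> \<gamma> / (real q powr \<tau>)}"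

end

theory Submission
  imports Defs
begin

text \<open>Write \<open>b = \<alpha> - n = 1/\<alpha>\<close>, the positive root of \<open>x\<^sup>2 + n x = 1\<close>, so that
  \<open>\<gamma> = b\<close> and \<open>n\<^sup>\<tau> = \<alpha> = n + b\<close>. For \<open>q < n\<close> the distance from \<open>b q\<close> to the
  nearest integer is already at least \<open>b\<close>. For \<open>q \<ge> n\<close> one uses the factorisation
  \<open>(b q - p)(\<alpha> q + p) = q\<^sup>2 - n p q - p\<^sup>2\<close>: the right-hand side is a non-zero integer,
  and \<open>q\<^sup>\<tau> \<ge> (q/n) n\<^sup>\<tau>\<close> makes \<open>b/q\<^sup>\<tau>\<close> too small for \<open>\<bar>b q - p\<bar>\<close> to stay below it.
  Isolation comes from the two constraints \<open>q = 1, p = 0\<close> and \<open>q = n, p = 1\<close>: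
  the first forces \<open>x \<ge> b\<close>, and since \<open>n b - 1 = -b\<^sup>2 = -b/n\<^sup>\<tau>\<close> the second
  excludes every \<open>x\<close> in \<open>(b, b + b\<^sup>2/n)\<close>.\<close>

lemma quadratic_root_formula:
  fixes n :: real
  assumes "n \<ge> 0"
  defines "b \<equiv> (sqrt (n\<^sup>2 + 4) - n) / 2"
  shows "b > 0" and "b\<^sup>2 + n * b = 1"
proof -
  have "sqrt (n\<^sup>2 + 4) > sqrt (n\<^sup>2)"
    by (intro real_sqrt_less_mono) simp
  then show "b > 0"
    using assms(1) by (simp add: b_def)
  show "b\<^sup>2 + n * b = 1"
    by (simp add: b_def power2_eq_square field_simps)
qed

lemma int_sq_add_mult_neq_sq:
  fixes n p q :: int
  assumes "n \<ge> 1" and "p \<ge> 1" and "q \<ge> 0"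
  shows "p\<^sup>2 + n * p * q \<noteq> q\<^sup>2"
  using assms(2,3)
  \<comment> \<open>Descent \<open>(p, q) \<mapsto> (q - n p, p)\<close>: in disguise, the irrationality of the root of \<open>x\<^sup>2 + n x = 1\<close>.\<close>
proof (induction "nat q" arbitrary: p q rule: less_induct)
  case less
  show ?case
  proof
    assume eq: "p\<^sup>2 + n * p * q = q\<^sup>2"
    have "p * p > 0"
      using less.prems by simp
    then have "q * q > (n * p) * q"
      using eq by (simp add: power2_eq_square algebra_simps)
    then have "q > n * p"
      using less.prems by (smt (verit) mult_right_mono)
    moreover have "n * p \<ge> p"
      using assms(1) less.prems by simp
    ultimately have "nat p < nat q"
      using less.prems by (simp only: nat_less_eq_zless)
    moreover have "(q - n * p)\<^sup>2 + n * (q - n * p) * p = p\<^sup>2"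
      using eq by (simp add: power2_eq_square algebra_simps)
    ultimately show False
      using less.hyps[of p "q - n * p"] \<open>q > n * p\<close> less.prems by simp
  qed
qed

lemma conjugate_factorisation:
  fixes b n p q :: real
  assumes "b\<^sup>2 + n * b = 1"
  shows "(b * q - p) * (q / b + p) = q\<^sup>2 - n * p * q - p\<^sup>2"
proof -
  have "b \<noteq> 0"
    using assms by auto
  then have "b - 1 / b = - n"
    using assms by (simp add: field_simps power2_eq_square)
  moreover have "(b * q - p) * (q / b + p) = q\<^sup>2 + (b - 1 / b) * p * q - p\<^sup>2"
    using \<open>b \<noteq> 0\<close> by (simp add: field_simps power2_eq_square)
  ultimately show ?thesis
    by simp
qed

lemma powr_ge_ratio_mult_powr:
  fixes a x \<tau> :: real
  assumes "0 < a" and "a \<le> x" and "1 \<le> \<tau>"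
  shows "x / a * a powr \<tau> \<le> x powr \<tau>"
proof -
  have "x / a = (x / a) powr 1"
    using assms by simp
  also have "\<dots> \<le> (x / a) powr \<tau>"
    using assms by (intro powr_mono) auto
  also have "\<dots> = x powr \<tau> / a powr \<tau>"
    using assms by (simp add: powr_divide)
  finally show ?thesis
    using assms by (simp add: field_simps)
qed

lemma quadratic_root_less_one:
  fixes b n :: real
  assumes "b > 0" and "b\<^sup>2 + n * b = 1" and "n > 0"
  shows "b < 1"
proof -
  have "n * b > 0"
    using assms by simp
  then have "b\<^sup>2 < 1\<^sup>2"
    using assms(2) by simp
  then show ?thesis
    by (rule power2_less_imp_less) simp
qed

lemma small_denominator_distance:
  fixes b n q :: real and p :: int
  assumes "b > 0" and "b\<^sup>2 + n * b = 1" and "1 \<le> q" and "q \<le> n - 1"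
  shows "b \<le> \<bar>b * q - p\<bar>"
proof (cases "p \<le> 0")
  case True
  have "b \<le> b * q"
    using assms(1,3) by simp
  with True show ?thesis
    by linarith
next
  case False
  then have "1 \<le> p"
    by simp
  moreover have "b * q \<le> b * (n - 1)"
    using assms(1,4) by simp
  ultimately have "b\<^sup>2 + b \<le> p - b * q"
    using assms(2) by (simp add: algebra_simps)
  then show ?thesis
    using abs_ge_minus_self[of "b * q - p"] zero_le_power2[of b] by linarith
qed

lemma large_denominator_distance:
  fixes b t :: real and n q :: nat and p :: int
  assumes b: "b > 0" "b\<^sup>2 + n * b = 1" and "n \<ge> 1" and "q \<ge> 1"
    and t: "1 \<le> b * t" "q \<le> n * b * t"
  shows "b / t \<le> \<bar>b * q - p\<bar>"
proof -
  define \<delta> where "\<delta> = \<bar>b * q - p\<bar>"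
  have "t > 0"
    using b(1) t(1) by (smt (verit) mult_nonneg_nonpos)
  have "b \<le> 1"
    using quadratic_root_less_one[OF b] \<open>n \<ge> 1\<close> by simp
  have b_over_t: "b / t \<le> b\<^sup>2"
    using \<open>t > 0\<close> b(1) t(1) by (simp add: field_simps power2_eq_square)
  show ?thesis
  proof (cases "p \<le> 0")
    case True
    have "b \<le> b * q"
      using b(1) \<open>q \<ge> 1\<close> by simp
    moreover have "b\<^sup>2 \<le> b"
      using \<open>b \<le> 1\<close> b(1) by (simp add: power2_eq_square)
    ultimately show ?thesis
      using True b_over_t by linarith
  next
    case False
    have "(int q)\<^sup>2 - int n * p * int q - p\<^sup>2 \<noteq> 0"
      using int_sq_add_mult_neq_sq[of "int n" p "int q"] False \<open>n \<ge> 1\<close> by auto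
    then have "1 \<le> \<bar>of_int ((int q)\<^sup>2 - int n * p * int q - p\<^sup>2) :: real\<bar>"
      by (metis of_int_1_le_iff of_int_abs zero_less_abs_iff int_one_le_iff_zero_less)
    also have "\<dots> = \<bar>q\<^sup>2 - n * p * q - p\<^sup>2\<bar>"
      by simp
    also have "\<dots> = \<bar>(b * q - p) * (q / b + p)\<bar>"
      by (simp add: conjugate_factorisation[OF b(2)])
    also have "\<dots> = \<delta> * (q / b + p)"
      using False b(1) by (simp add: \<delta>_def abs_mult add_pos_pos)
    also have "\<dots> \<le> \<delta> * (q / b + b * q + \<delta>)"
      unfolding \<delta>_def by (intro mult_left_mono) auto
    finally have lower: "1 \<le> \<delta> * (q / b + b * q + \<delta>)" .
    show ?thesis
    proof (rule ccontr)
      assume "\<not> ?thesis"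
      then have "\<delta> < b / t"
        by (simp add: \<delta>_def)
      then have "\<delta> * (q / b + b * q + \<delta>) < b / t * (q / b + b * q + b / t)"
        using b(1) \<open>t > 0\<close> by (intro mult_strict_mono) (auto simp: \<delta>_def)
      also have "\<dots> = q / t * (1 + b\<^sup>2) + (b / t)\<^sup>2"
        using b(1) \<open>t > 0\<close> by (simp add: field_simps power2_eq_square)
      also have "\<dots> \<le> n * b * (1 + b\<^sup>2) + (b\<^sup>2)\<^sup>2"
        using \<open>t > 0\<close> t(2) b_over_t b(1)
        by (intro add_mono mult_right_mono power_mono) (auto simp: field_simps)
      also have "\<dots> = (1 - b\<^sup>2) * (1 + b\<^sup>2) + (b\<^sup>2)\<^sup>2"
        using b(2) by (simp add: eq_diff_eq')
      also have "\<dots> = 1"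
        by (simp add: algebra_simps power2_eq_square)
      finally show False
        using lower by linarith
    qed
  qed
qed

lemma quadratic_root_in_diophantine_set:
  fixes b \<tau> :: real and n :: nat
  assumes b: "b > 0" "b\<^sup>2 + n * b = 1" and "n \<ge> 2" and n_powr: "real n powr \<tau> = 1 / b"
  shows "b \<in> diophantine_set b \<tau>"
proof -
  have "1 / b = n + b"
    using b by (simp add: field_simps power2_eq_square)
  then have "real n powr 1 \<le> real n powr \<tau>"
    using n_powr b(1) by simp
  then have "\<tau> \<ge> 1"
    by (rule powr_le_cancel_iff[THEN iffD1, rotated]) (use \<open>n \<ge> 2\<close> in simp)
  have "b / real q powr \<tau> \<le> \<bar>b * q - p\<bar>" if "q \<ge> 1" for p :: int and q :: nat
  proof (cases "q < n")
    case True
    have "1 \<le> real q powr \<tau>"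
      using that \<open>\<tau> \<ge> 1\<close> by (simp add: ge_one_powr_ge_zero)
    then have "b / real q powr \<tau> \<le> b"
      using b(1) by (simp add: divide_le_eq mult_le_cancel_left1)
    also have "b \<le> \<bar>b * q - p\<bar>"
      using small_denominator_distance[OF b, of q p] that True by simp
    finally show ?thesis .
  next
    case False
    define t where "t = real q powr \<tau>"
    have "q / n * (1 / b) \<le> t"
      using powr_ge_ratio_mult_powr[of n q \<tau>] False \<open>n \<ge> 2\<close> \<open>\<tau> \<ge> 1\<close>
      by (simp add: t_def n_powr)
    then have q_le: "q \<le> n * b * t"
      using \<open>n \<ge> 2\<close> b(1) by (simp add: field_simps)
    with False have "n * 1 \<le> n * (b * t)"
      by (simp add: algebra_simps)
    then have "1 \<le> b * t"
      using \<open>n \<ge> 2\<close> by simp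
    with q_le show ?thesis
      using large_denominator_distance[OF b, of q t p] that \<open>n \<ge> 2\<close> by (simp add: t_def)
  qed
  then show ?thesis
    by (simp add: diophantine_set_def)
qed

lemma diophantine_set_near_quadratic_root:
  fixes b \<tau> x :: real and n :: nat
  assumes b: "b > 0" "b\<^sup>2 + n * b = 1" and "n \<ge> 1" and n_powr: "real n powr \<tau> = 1 / b"
    and x: "x \<in> diophantine_set b \<tau>" "\<bar>x - b\<bar> < b\<^sup>2 / n"
  shows "x = b"
proof -
  have "b / real 1 powr \<tau> \<le> \<bar>x * real 1 - real_of_int 0\<bar>"
    using x(1) unfolding diophantine_set_def by blast
  then have "b \<le> \<bar>x\<bar>"
    by simp
  have "b < 1"
    using quadratic_root_less_one[OF b] \<open>n \<ge> 1\<close> by simp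
  then have "b \<le> n"
    using \<open>n \<ge> 1\<close> by simp
  then have "b\<^sup>2 / n \<le> b"
    using b(1) \<open>n \<ge> 1\<close> by (simp add: field_simps power2_eq_square)
  then have "b \<le> x"
    using x(2) \<open>b \<le> \<bar>x\<bar>\<close> by (simp add: abs_if split: if_splits)
  then have "0 \<le> n * (x - b)"
    by simp
  moreover have "n * (x - b) < b\<^sup>2"
  proof -
    have "n * (x - b) \<le> n * \<bar>x - b\<bar>"
      by (intro mult_left_mono) auto
    also have "\<dots> < b\<^sup>2"
      using x(2) \<open>n \<ge> 1\<close> by (simp add: field_simps)
    finally show ?thesis .
  qed
  moreover have "b\<^sup>2 \<le> \<bar>n * (x - b) - b\<^sup>2\<bar>"
  proof -
    have "b / real n powr \<tau> \<le> \<bar>x * n - real_of_int 1\<bar>"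
      using x(1) \<open>n \<ge> 1\<close> unfolding diophantine_set_def by blast
    moreover have "x * n - 1 = n * (x - b) - b\<^sup>2"
      using b(2) by (simp add: algebra_simps)
    ultimately show ?thesis
      by (simp add: n_powr power2_eq_square)
  qed
  ultimately have "n * (x - b) = 0"
    by linarith
  then show ?thesis
    using \<open>n \<ge> 1\<close> by simp
qed

theorem mainTheorem4:
  fixes n :: nat
  assumes "n \<ge> 2"
  defines "\<alpha> \<equiv> (real n + sqrt (real n ^ 2 + 4)) / 2"
  defines "\<gamma> \<equiv> 1 / \<alpha>"
  defines "\<tau> \<equiv> ln \<alpha> / ln (real n)"
  shows "\<alpha> - real n \<in> diophantine_set \<gamma> \<tau> \<inter> {0..1}
     \<and> \<not> ((\<alpha> - real n) islimpt (diophantine_set \<gamma> \<tau> \<inter> {0..1}))"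
proof -
  define b where "b = \<alpha> - real n"
  have b_eq: "b = (sqrt ((real n)\<^sup>2 + 4) - real n) / 2"
    by (simp add: b_def \<alpha>_def field_simps)
  have b: "b > 0" "b\<^sup>2 + n * b = 1"
    unfolding b_eq using quadratic_root_formula[of "real n"] by simp_all
  have "\<alpha> = 1 / b"
    using b by (simp add: b_def field_simps power2_eq_square)
  then have "\<gamma> = b" and n_powr: "real n powr \<tau> = 1 / b"
    using b(1) \<open>n \<ge> 2\<close> by (simp_all add: \<gamma>_def \<tau>_def powr_def)
  have "b < 1"
    using quadratic_root_less_one[OF b] \<open>n \<ge> 2\<close> by simp
  moreover have "b \<in> diophantine_set b \<tau>"
    using quadratic_root_in_diophantine_set[OF b \<open>n \<ge> 2\<close> n_powr] .
  moreover have "\<not> b islimpt (diophantine_set b \<tau> \<inter> {0..1})"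
  proof
    assume "b islimpt (diophantine_set b \<tau> \<inter> {0..1})"
    moreover have "b\<^sup>2 / n > 0"
      using b(1) \<open>n \<ge> 2\<close> by simp
    ultimately obtain x where "x \<in> diophantine_set b \<tau>" "x \<noteq> b" "\<bar>x - b\<bar> < b\<^sup>2 / n"
      unfolding islimpt_approachable dist_real_def by blast
    then show False
      using diophantine_set_near_quadratic_root[OF b _ n_powr] \<open>n \<ge> 2\<close> by simp
  qed
  ultimately show ?thesis
    using b(1) by (simp add: b_def \<open>\<gamma> = b\<close>)
qed

end
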